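(* Let $X$ be a compact metric space and $f\colon X\to X$ continuous. If $(X,f)$ has the shadowing property, then it has $\gamma$-restricted two-sided cofinal orbital shadowing.
   Context: Shadowing: for every $\epsilon>0$ there is $\delta>0$ such that for every sequence $\langle x_i\rangle_{i\ge0}$ with $d(f(x_i),x_{i+1})<\delta$ for all $i$ there is $z\in X$ with $d(f^i(z),x_i)<\epsilon$ for all $i\ge0$. $d_H$ is the Hausdorff metric. A full trajectory is $\langle z_i\rangle_{i\in\mathbb Z}$ with $f(z_i)=z_{i+1}$. For two-sided sequences, $\omega(\langle x_i\rangle)=\bigcap_{M}\overline{\{x_n:n>M\}}$, $\alpha(\langle x_i\rangle)=\bigcap_{M}\overline{\{x_n:n<-M\}}$. A two-sided $\delta$-pseudo-orbit is $\langle x_i\rangle_{i\in\mathbb Z}$ with $d(f(x_i),x_{i+1})<\delta$ for all $i$. $\gamma$-restricted two-sided cofinal orbital shadowing: for every $\epsilon>0$ there is $\delta>0$ such that for every two-sided $\delta$-pseudo-orbit $\langle x_i\rangle$ with $d_H(\alpha(\langle x_i\rangle),\omega(\langle x_i\rangle))<\epsilon$ there is a full trajectory $\langle z_i\rangle$ such that for every $K\in\mathbb N$ there is $N\ge K$ with $d_H(\overline{\{z_{N+i}\}_{i\ge0}},\overline{\{x_{N+i}\}_{i\ge0}})<\epsilon$ and $d_H(\overline{\{z_{i-N}\}_{i\le0}},\overline{\{x_{i-N}\}_{i\le0}})<\epsilon$. *)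

theory Defs
  imports "HOL-Analysis.Analysis"
begin

definition hausdorff_dist :: "'a::metric_space set \<Rightarrow> 'a set \<Rightarrow> real" where
  "hausdorff_dist A B = max (SUP a\<in>A. infdist a B) (SUP b\<in>B. infdist b A)"

definition shadowing :: "'a::metric_space set \<Rightarrow> ('a \<Rightarrow> 'a) \<Rightarrow> bool" where
  "shadowing X f \<longleftrightarrow>
     (\<forall>\<epsilon>>0. \<exists>\<delta>>0. \<forall>x::nat \<Rightarrow> 'a.
        (\<forall>i. x i \<in> X) \<and> (\<forall>i. dist (f (x i)) (x (Suc i)) < \<delta>) \<longrightarrow>
        (\<exists>z\<in>X. \<forall>i. dist ((f ^^ i) z) (x i) < \<epsilon>))"

definition two_sided_pseudo_orbit :: "'a::metric_space set \<Rightarrow> ('a \<Rightarrow> 'a) \<Rightarrow> real \<Rightarrow> (int \<Rightarrow> 'a) \<Rightarrow> bool" where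
  "two_sided_pseudo_orbit X f \<delta> x \<longleftrightarrow>
     (\<forall>i. x i \<in> X) \<and> (\<forall>i. dist (f (x i)) (x (i + 1)) < \<delta>)"

definition full_trajectory :: "'a set \<Rightarrow> ('a \<Rightarrow> 'a) \<Rightarrow> (int \<Rightarrow> 'a) \<Rightarrow> bool" where
  "full_trajectory X f z \<longleftrightarrow> (\<forall>i. z i \<in> X) \<and> (\<forall>i. f (z i) = z (i + 1))"

definition omega_seq :: "(int \<Rightarrow> 'a::topological_space) \<Rightarrow> 'a set" where
  "omega_seq x = (\<Inter>M::nat. closure {x n | n. n > int M})"

definition alpha_seq :: "(int \<Rightarrow> 'a::topological_space) \<Rightarrow> 'a set" where
  "alpha_seq x = (\<Inter>M::nat. closure {x n | n. n < - int M})"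

definition gamma_restricted_two_sided_cofinal_orbital_shadowing ::
  "'a::metric_space set \<Rightarrow> ('a \<Rightarrow> 'a) \<Rightarrow> bool" where
  "gamma_restricted_two_sided_cofinal_orbital_shadowing X f \<longleftrightarrow>
     (\<forall>\<epsilon>>0. \<exists>\<delta>>0. \<forall>x::int \<Rightarrow> 'a.
        two_sided_pseudo_orbit X f \<delta> x \<and>
        hausdorff_dist (alpha_seq x) (omega_seq x) < \<epsilon> \<longrightarrow>
        (\<exists>z. full_trajectory X f z \<and>
           (\<forall>K::nat. \<exists>N\<ge>K.
              hausdorff_dist (closure {z (int N + i) | i. i \<ge> 0})
                             (closure {x (int N + i) | i. i \<ge> 0}) < \<epsilon> \<and>
              hausdorff_dist (closure {z (i - int N) | i. i \<le> 0})
                             (closure {x (i - int N) | i. i \<le> 0}) < \<epsilon>)))"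

end

theory Submission
  imports Defs
begin

text \<open>On a compact space shadowing already gives two-sided shadowing: shadow the one-sided
  pseudo-orbits started at times \<open>-n\<close> and take a pointwise limit of these orbit segments in
  the compact product \<open>X\<^sup>\<int>\<close>; continuity of \<open>f\<close> makes the limit a full trajectory. A full
  trajectory that is pointwise \<open>\<epsilon>/2\<close>-close to the pseudo-orbit has each forward and backward
  tail within Hausdorff distance \<open>\<epsilon>/2\<close> of the corresponding tail of the pseudo-orbit.\<close>

definition two_sided_shadowing :: "'a::metric_space set \<Rightarrow> ('a \<Rightarrow> 'a) \<Rightarrow> bool" where
  "two_sided_shadowing X f \<longleftrightarrow>
     (\<forall>\<epsilon>>0. \<exists>\<delta>>0. \<forall>x. two_sided_pseudo_orbit X f \<delta> x \<longrightarrow>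
        (\<exists>z. full_trajectory X f z \<and> (\<forall>i. dist (z i) (x i) \<le> \<epsilon>)))"

lemma funpow_mem:
  assumes "f ` X \<subseteq> X" "x \<in> X"
  shows "(f ^^ n) x \<in> X"
  using assms by (induction n) auto

lemma SUP_infdist_closure_le:
  fixes A B :: "'a::metric_space set"
  assumes "A \<noteq> {}" "B \<noteq> {}" and close: "\<forall>a\<in>A. \<exists>b\<in>B. dist a b \<le> c"
  shows "(SUP a\<in>closure A. infdist a (closure B)) \<le> c"
proof (rule cSUP_least)
  show "closure A \<noteq> {}" using \<open>A \<noteq> {}\<close> by simp
next
  fix a assume "a \<in> closure A"
  have "A \<subseteq> {a. infdist a B \<le> c}"
  proof
    fix p
    assume "p \<in> A"
    then obtain b where "b \<in> B" "dist p b \<le> c"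
      using close by blast
    then show "p \<in> {a. infdist a B \<le> c}"
      using infdist_le[of b B p] by simp
  qed
  moreover have "closed {a. infdist a B \<le> c}"
    by (intro closed_Collect_le continuous_intros continuous_on_infdist)
  ultimately have "closure A \<subseteq> {a. infdist a B \<le> c}"
    by (rule closure_minimal)
  moreover have "infdist a (closure B) \<le> infdist a B"
    by (rule infdist_mono[OF closure_subset \<open>B \<noteq> {}\<close>])
  ultimately show "infdist a (closure B) \<le> c"
    using \<open>a \<in> closure A\<close> by auto
qed

lemma hausdorff_dist_closure_le:
  fixes A B :: "'a::metric_space set"
  assumes "A \<noteq> {}" "B \<noteq> {}"
    and "\<forall>a\<in>A. \<exists>b\<in>B. dist a b \<le> c" "\<forall>b\<in>B. \<exists>a\<in>A. dist b a \<le> c"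
  shows "hausdorff_dist (closure A) (closure B) \<le> c"
  unfolding hausdorff_dist_def
  using SUP_infdist_closure_le[OF assms(1,2,3)] SUP_infdist_closure_le[OF assms(2,1,4)]
  by (rule max.boundedI)

lemma hausdorff_dist_tails_le:
  fixes x z :: "int \<Rightarrow> 'a::metric_space"
  assumes close: "\<And>i. dist (z i) (x i) \<le> c"
  shows "hausdorff_dist (closure {z (N + i) | i. i \<ge> 0}) (closure {x (N + i) | i. i \<ge> 0}) \<le> c"
    and "hausdorff_dist (closure {z (i - N) | i. i \<le> 0}) (closure {x (i - N) | i. i \<le> 0}) \<le> c"
proof -
  have close': "\<And>i. dist (x i) (z i) \<le> c"
    using close by (simp add: dist_commute)
  show "hausdorff_dist (closure {z (N + i) | i. i \<ge> 0}) (closure {x (N + i) | i. i \<ge> 0}) \<le> c"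
    and "hausdorff_dist (closure {z (i - N) | i. i \<le> 0}) (closure {x (i - N) | i. i \<le> 0}) \<le> c"
    using close close' by (intro hausdorff_dist_closure_le; blast)+
qed

lemma compact_pointwise_convergent_subseq:
  fixes t :: "nat \<Rightarrow> 'i::countable \<Rightarrow> 'a::metric_space"
  assumes "compact X" and tX: "\<And>n j. t n j \<in> X"
  obtains w r where "strict_mono r" "\<And>j. w j \<in> X" "\<And>j. (\<lambda>n. t (r n) j) \<longlonglongrightarrow> w j"
proof -
  have "compactin (product_topology (\<lambda>_. euclidean) UNIV) (PiE UNIV (\<lambda>_::'i. X))"
    using \<open>compact X\<close> by (simp add: compactin_PiE compactin_euclidean_iff)
  then have "seq_compact (PiE UNIV (\<lambda>_::'i. X))"
    by (simp add: euclidean_product_topology compactin_euclidean_iff compact_imp_seq_compact)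
  moreover have "\<forall>n. t n \<in> PiE UNIV (\<lambda>_. X)"
    by (simp add: PiE_UNIV_domain tX)
  ultimately obtain w r where w: "w \<in> PiE UNIV (\<lambda>_. X)" and "strict_mono r" "(t \<circ> r) \<longlonglongrightarrow> w"
    by (rule seq_compactE)
  have "(\<lambda>n. t (r n) j) \<longlonglongrightarrow> w j" for j
  proof -
    have "isCont (\<lambda>g. g j) w"
      using continuous_on_product_coordinates[of j] continuous_on_eq_continuous_at by blast
    from isCont_tendsto_compose[OF this \<open>(t \<circ> r) \<longlonglongrightarrow> w\<close>] show ?thesis
      by (simp add: o_def)
  qed
  moreover have "w j \<in> X" for j
    using w by blast
  ultimately show thesis
    using that[OF \<open>strict_mono r\<close>] by blast
qed

lemma full_trajectory_limit_of_shifted_orbits: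
  fixes x :: "int \<Rightarrow> 'a::metric_space"
  assumes "compact X" "continuous_on X f" "f ` X \<subseteq> X"
    and zX: "\<And>n. z n \<in> X"
    and close: "\<And>n i. dist ((f ^^ i) (z n)) (x (int i - int n)) \<le> \<epsilon>"
  obtains w where "full_trajectory X f w" "\<And>j. dist (w j) (x j) \<le> \<epsilon>"
proof -
  \<comment> \<open>For \<open>j < -n\<close> the value \<open>t n j = z n\<close> is junk; a fixed \<open>j\<close> meets it for finitely
    many \<open>n\<close> only.\<close>
  define t where "t n j = (f ^^ nat (j + int n)) (z n)" for n :: nat and j :: int
  have tX: "t n j \<in> X" for n j
    unfolding t_def using funpow_mem[OF \<open>f ` X \<subseteq> X\<close> zX] .
  obtain r w where "strict_mono r" and wX: "\<And>j. w j \<in> X"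
    and lim: "\<And>j. (\<lambda>n. t (r n) j) \<longlonglongrightarrow> w j"
    using compact_pointwise_convergent_subseq[of X t, OF \<open>compact X\<close> tX] by metis
  have eventually_nonneg: "\<forall>\<^sub>F n in sequentially. 0 \<le> j + int (r n)" for j
    using eventually_ge_at_top[of "nat (- j)"]
  proof eventually_elim
    case (elim n)
    then show ?case
      using seq_suble[OF \<open>strict_mono r\<close>, of n] by linarith
  qed
  have "f (w j) = w (j + 1)" for j
  proof -
    have "(\<lambda>n. f (t (r n) j)) \<longlonglongrightarrow> f (w j)"
      using continuous_on_tendsto_compose[OF \<open>continuous_on X f\<close> lim wX] by (simp add: tX)
    moreover have "\<forall>\<^sub>F n in sequentially. f (t (r n) j) = t (r n) (j + 1)"
      using eventually_nonneg[of j]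
    proof eventually_elim
      case (elim n)
      then have "nat (j + 1 + int (r n)) = Suc (nat (j + int (r n)))" by simp
      then show ?case
        by (simp only: t_def funpow.simps o_apply)
    qed
    ultimately have "(\<lambda>n. t (r n) (j + 1)) \<longlonglongrightarrow> f (w j)"
      by (rule Lim_transform_eventually)
    then show ?thesis
      using lim[of "j + 1"] LIMSEQ_unique by blast
  qed
  then have "full_trajectory X f w"
    unfolding full_trajectory_def using wX by auto
  moreover have "dist (w j) (x j) \<le> \<epsilon>" for j
  proof (rule tendsto_upperbound)
    show "(\<lambda>n. dist (t (r n) j) (x j)) \<longlonglongrightarrow> dist (w j) (x j)"
      by (intro tendsto_intros lim)
    show "\<forall>\<^sub>F n in sequentially. dist (t (r n) j) (x j) \<le> \<epsilon>"
      using eventually_nonneg[of j]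
    proof eventually_elim
      case (elim n)
      then show ?case
        using close[where n = "r n" and i = "nat (j + int (r n))"] by (simp add: t_def)
    qed
  qed simp
  ultimately show thesis
    by (rule that)
qed

lemma shadowing_imp_two_sided_shadowing:
  assumes "compact X" "continuous_on X f" "f ` X \<subseteq> X" and "shadowing X f"
  shows "two_sided_shadowing X f"
  unfolding two_sided_shadowing_def
proof (intro allI impI)
  fix \<epsilon> :: real
  assume "\<epsilon> > 0"
  then obtain \<delta> where "\<delta> > 0" and shadow: "\<And>y. (\<forall>i. y i \<in> X) \<and> (\<forall>i. dist (f (y i)) (y (Suc i)) < \<delta>)
      \<Longrightarrow> \<exists>z\<in>X. \<forall>i. dist ((f ^^ i) z) (y i) < \<epsilon>"
    using \<open>shadowing X f\<close> unfolding shadowing_def by metis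
  have "\<exists>z. full_trajectory X f z \<and> (\<forall>i. dist (z i) (x i) \<le> \<epsilon>)"
    if po: "two_sided_pseudo_orbit X f \<delta> x" for x
  proof -
    have "\<exists>z\<in>X. \<forall>i. dist ((f ^^ i) z) (x (int i - int n)) < \<epsilon>" for n
    proof (rule shadow, intro conjI allI)
      fix i :: nat
      show "x (int i - int n) \<in> X"
        using po unfolding two_sided_pseudo_orbit_def by blast
      have "int (Suc i) - int n = (int i - int n) + 1"
        by simp
      then show "dist (f (x (int i - int n))) (x (int (Suc i) - int n)) < \<delta>"
        using po unfolding two_sided_pseudo_orbit_def by presburger
    qed
    then obtain z where "\<And>n. z n \<in> X" "\<And>n i. dist ((f ^^ i) (z n)) (x (int i - int n)) \<le> \<epsilon>"
      by (metis less_imp_le)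
    from full_trajectory_limit_of_shifted_orbits[OF assms(1-3) this] show ?thesis
      by blast
  qed
  then show "\<exists>\<delta>>0. \<forall>x. two_sided_pseudo_orbit X f \<delta> x \<longrightarrow>
      (\<exists>z. full_trajectory X f z \<and> (\<forall>i. dist (z i) (x i) \<le> \<epsilon>))"
    using \<open>\<delta> > 0\<close> by blast
qed

lemma two_sided_shadowing_imp_gamma_restricted_two_sided_cofinal_orbital_shadowing:
  assumes "two_sided_shadowing X f"
  shows "gamma_restricted_two_sided_cofinal_orbital_shadowing X f"
  unfolding gamma_restricted_two_sided_cofinal_orbital_shadowing_def
proof (intro allI impI)
  fix \<epsilon> :: real
  assume "\<epsilon> > 0"
  then obtain \<delta> where "\<delta> > 0" and shadow: "\<And>x. two_sided_pseudo_orbit X f \<delta> x \<Longrightarrow>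
      \<exists>z. full_trajectory X f z \<and> (\<forall>i. dist (z i) (x i) \<le> \<epsilon> / 2)"
    using assms half_gt_zero unfolding two_sided_shadowing_def by blast
  have "\<exists>z. full_trajectory X f z \<and>
           (\<forall>K::nat. \<exists>N\<ge>K.
              hausdorff_dist (closure {z (int N + i) | i. i \<ge> 0})
                             (closure {x (int N + i) | i. i \<ge> 0}) < \<epsilon> \<and>
              hausdorff_dist (closure {z (i - int N) | i. i \<le> 0})
                             (closure {x (i - int N) | i. i \<le> 0}) < \<epsilon>)"
    if po: "two_sided_pseudo_orbit X f \<delta> x" for x
  proof -
    obtain z where "full_trajectory X f z" and close: "\<And>i. dist (z i) (x i) \<le> \<epsilon> / 2"
      using shadow[OF po] by blast
    note tails = hausdorff_dist_tails_le[of z x, OF close]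
    have "\<epsilon> / 2 < \<epsilon>"
      using \<open>\<epsilon> > 0\<close> by simp
    then show ?thesis
      using \<open>full_trajectory X f z\<close> tails by (blast intro: order_le_less_trans order_refl)
  qed
  then show "\<exists>\<delta>>0. \<forall>x. two_sided_pseudo_orbit X f \<delta> x \<and>
        hausdorff_dist (alpha_seq x) (omega_seq x) < \<epsilon> \<longrightarrow>
        (\<exists>z. full_trajectory X f z \<and>
           (\<forall>K::nat. \<exists>N\<ge>K.
              hausdorff_dist (closure {z (int N + i) | i. i \<ge> 0})
                             (closure {x (int N + i) | i. i \<ge> 0}) < \<epsilon> \<and>
              hausdorff_dist (closure {z (i - int N) | i. i \<le> 0})
                             (closure {x (i - int N) | i. i \<le> 0}) < \<epsilon>))"
    using \<open>\<delta> > 0\<close> by blast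
qed

theorem mainTheorem6:
  fixes X :: "'a::metric_space set" and f :: "'a \<Rightarrow> 'a"
  assumes "compact X" and "continuous_on X f" and "f ` X \<subseteq> X"
    and "shadowing X f"
  shows "gamma_restricted_two_sided_cofinal_orbital_shadowing X f"
  using assms
  by (intro two_sided_shadowing_imp_gamma_restricted_two_sided_cofinal_orbital_shadowing
      shadowing_imp_two_sided_shadowing)

end
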